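(* Assume (A1) and (H1), let $\lambda>1$, let $(X,\nu,\eta)$ be the solution of the fluid equations with arrival rate $\lambda$ and initial condition $(X(0),\nu_0,\eta_0)\in\bar{\mathcal S}_0$, and let $\theta_t$ be as in the context. Then $\sup_{t\ge0}\langle h^s,\theta_t\rangle\le c_h$, $\int_0^\infty\langle h^s,\theta_t\rangle\,dt<\infty$, and $\int_0^\infty\big|\langle h^s,\theta_t\rangle\log\langle h^s,\theta_t\rangle\big|\,dt<\infty$ (with $0\log0=0$).
   Context: Standing assumption (A1): $G^s,G^r$ are cumulative distribution functions on $[0,\infty)$ with $G^s(0+)=G^r(0+)=0$, absolutely continuous with densities $g^s,g^r$. Write $\bar G^s=1-G^s$, $\bar G^r=1-G^r$, $H^s=\sup\{x\ge0:G^s(x)<1\}$, $H^r=\sup\{x\ge0:G^r(x)<1\}$, and hazard rates $h^s=g^s/\bar G^s$ on $[0,H^s)$, $h^r=g^r/\bar G^r$ on $[0,H^r)$. It is assumed that $\int_0^\infty\bar G^r(x)\,dx<\infty$, $\int_0^\infty\bar G^s(x)\,dx=\int_0^\infty xg^s(x)\,dx=1$, and that there exist $\bar H^s<H^s$ and $\bar H^r<H^r$ such that $h^s$ (resp. $h^r$) is a.e. equal to a function that is bounded or lower semicontinuous on $(\bar H^s,H^s)$ (resp. $(\bar H^r,H^r)$). Notation: $\mathcal M_F[0,H)$ is the set of finite nonnegative Borel measures on $[0,H)$; $\langle\psi,\mu\rangle=\int\psi\,d\mu$; $\mathbf 1$ is the constant function $1$; for $\mu\in\mathcal M_F[0,H)$,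 $F^\mu(x)=\mu[0,x]$ and $(F^\mu)^{-1}(y)=\inf\{x>0:F^\mu(x)\ge y\}$. State space: $\bar{\mathcal S}_0=\{(x,\nu,\eta)\in\mathbb R_+\times\mathcal M_F[0,H^s)\times\mathcal M_F[0,H^r):1-\langle\mathbf 1,\nu\rangle=[1-x]^+\}$. Fluid equations: Given $\lambda\ge0$ and $(X(0),\nu_0,\eta_0)\in\bar{\mathcal S}_0$, a càdlàg function $t\mapsto(X(t),\nu_t,\eta_t)$ is a solution of the fluid equations with arrival rate $\lambda$ and this initial condition if for all $t\ge0$: $S(t):=\int_0^t\langle h^r,\eta_s\rangle ds<\infty$ and $D(t):=\int_0^t\langle h^s,\nu_s\rangle ds<\infty$; for every $\varphi\in C^1_c([0,H^s)\times\mathbb R_+)$, $\langle\varphi(\cdot,t),\nu_t\rangle=\langle\varphi(\cdot,0),\nu_0\rangle+\int_0^t\langle\varphi_s(\cdot,s)+\varphi_x(\cdot,s),\nu_s\rangle ds-\int_0^t\langle h^s\varphi(\cdot,s),\nu_s\rangle ds+\int_0^t\varphi(0,s)\,dK(s)$, where $K(t)=\langle\mathbf 1,\nu_t\rangle-\langle\mathbf 1,\nu_0\rangle+D(t)$; for every $\varphi\in C^1_c([0,H^r)\times\mathbb R_+)$, $\langle\varphi(\cdot,t),\eta_t\rangle=\langle\varphi(\cdot,0),\eta_0\rangle+\int_0^t\langle\varphi_s(\cdot,s)+\varphi_x(\cdot,s),\eta_s\rangle ds-\int_0^t\langle h^r\varphi(\cdot,s),\eta_s\rangle ds+\lambda\int_0^t\varphi(0,s)\,ds$;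 $1-\langle\mathbf 1,\nu_t\rangle=[1-X(t)]^+$; $X(t)=X(0)+\lambda t-D(t)-R(t)$ with $R(t)=\int_0^t\int_0^{Q(s)}h^r((F^{\eta_s})^{-1}(y))\,dy\,ds$ and $Q(t)=X(t)-\langle\mathbf 1,\nu_t\rangle$; and $Q(t)\le\langle\mathbf 1,\eta_t\rangle$. (H1): $\varepsilon_h:=\operatorname{ess\,inf}_{x\ge0}h^s(x)>0$ and $c_h:=\operatorname{ess\,sup}_{x\ge0}h^s(x)<\infty$ (so $H^s=\infty$). $\theta_t\in\mathcal M_F[0,\infty)$ is defined by $\langle\psi,\theta_t\rangle=\int_{[0,\infty)}\frac{\bar G^s(x+t)}{\bar G^s(x)}\psi(x+t)\,\nu_0(dx)$ for bounded measurable $\psi$ and for $\psi=h^s$. *)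

theory Defs
  imports "HOL-Probability.Probability"
begin

text \<open>A distribution on [0,oo) is given through its density g (which vanishes off [0,oo)
 for all purposes: the distribution function integrates g from 0).\<close>

definition cdf_d :: "(real \<Rightarrow> real) \<Rightarrow> real \<Rightarrow> real" where
  "cdf_d g x = (\<integral>y\<in>{0..x}. g y \<partial>lborel)"

definition ccdf_d :: "(real \<Rightarrow> real) \<Rightarrow> real \<Rightarrow> real" where
  "ccdf_d g x = 1 - cdf_d g x"

definition Hend :: "(real \<Rightarrow> real) \<Rightarrow> ereal" where
  "Hend g = Sup {ereal x | x. 0 \<le> x \<and> cdf_d g x < 1}"

text \<open>hazard rate h = g / (1 - G) (only meaningful on [0,H))\<close>
definition hazard :: "(real \<Rightarrow> real) \<Rightarrow> real \<Rightarrow> real" where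
  "hazard g x = g x / ccdf_d g x"

definition is_density :: "(real \<Rightarrow> real) \<Rightarrow> bool" where
  "is_density g \<longleftrightarrow> g \<in> borel_measurable borel \<and> (\<forall>x. 0 \<le> g x)
     \<and> (\<integral>\<^sup>+x\<in>{0..}. ennreal (g x) \<partial>lborel) = 1"

definition lsc_on :: "real set \<Rightarrow> (real \<Rightarrow> real) \<Rightarrow> bool" where
  "lsc_on U f \<longleftrightarrow> (\<forall>x\<in>U. \<forall>c<f x. \<exists>e>0. \<forall>y\<in>U. \<bar>y - x\<bar> < e \<longrightarrow> c < f y)"

definition hazard_regular :: "(real \<Rightarrow> real) \<Rightarrow> bool" where
  "hazard_regular g \<longleftrightarrow> (\<exists>Hb::real. 0 \<le> Hb \<and> ereal Hb < Hend g \<and>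
     (\<exists>f::real \<Rightarrow> real.
        (AE x in lborel. Hb < x \<and> ereal x < Hend g \<longrightarrow> hazard g x = f x) \<and>
        (bounded (f ` {x. Hb < x \<and> ereal x < Hend g}) \<or> lsc_on {x. Hb < x \<and> ereal x < Hend g} f)))"

definition A1 :: "(real \<Rightarrow> real) \<Rightarrow> (real \<Rightarrow> real) \<Rightarrow> bool" where
  "A1 gs gr \<longleftrightarrow> is_density gs \<and> is_density gr
     \<and> (\<integral>\<^sup>+x\<in>{0..}. ennreal (ccdf_d gr x) \<partial>lborel) < \<infinity>
     \<and> (\<integral>\<^sup>+x\<in>{0..}. ennreal (ccdf_d gs x) \<partial>lborel) = 1
     \<and> (\<integral>\<^sup>+x\<in>{0..}. ennreal (x * gs x) \<partial>lborel) = 1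
     \<and> hazard_regular gs \<and> hazard_regular gr"

definition dom0 :: "ereal \<Rightarrow> real set" where
  "dom0 H = {x. 0 \<le> x \<and> ereal x < H}"

definition MF :: "ereal \<Rightarrow> real measure \<Rightarrow> bool" where
  "MF H \<mu> \<longleftrightarrow> sets \<mu> = sets borel \<and> finite_measure \<mu> \<and> emeasure \<mu> (- dom0 H) = 0"

definition mass :: "real measure \<Rightarrow> real" where
  "mass \<mu> = measure \<mu> UNIV"

definition pair_nn :: "(real \<Rightarrow> real) \<Rightarrow> real measure \<Rightarrow> ennreal" where
  "pair_nn f \<mu> = (\<integral>\<^sup>+x. ennreal (f x) \<partial>\<mu>)"

definition Fmu :: "real measure \<Rightarrow> real \<Rightarrow> real" where
  "Fmu \<mu> x = measure \<mu> {0..x}"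

definition Fmu_inv :: "real measure \<Rightarrow> real \<Rightarrow> real" where
  "Fmu_inv \<mu> y = Inf {x. 0 < x \<and> Fmu \<mu> x \<ge> y}"

definition wconv :: "ereal \<Rightarrow> ('b \<Rightarrow> real measure) \<Rightarrow> real measure \<Rightarrow> 'b filter \<Rightarrow> bool" where
  "wconv H \<mu> m F \<longleftrightarrow> (\<forall>f::real \<Rightarrow> real. continuous_on (dom0 H) f \<and> bounded (f ` dom0 H) \<longrightarrow>
      ((\<lambda>s. \<integral>x. indicator (dom0 H) x * f x \<partial>\<mu> s) \<longlongrightarrow> (\<integral>x. indicator (dom0 H) x * f x \<partial>m)) F)"

definition S0bar :: "ereal \<Rightarrow> ereal \<Rightarrow> real \<Rightarrow> real measure \<Rightarrow> real measure \<Rightarrow> bool" where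
  "S0bar Hs Hr x \<nu> \<eta> \<longleftrightarrow> 0 \<le> x \<and> MF Hs \<nu> \<and> MF Hr \<eta> \<and> 1 - mass \<nu> = max 0 (1 - x)"

text \<open>phi x s: C^1 (as restriction of a C^1 function on R^2), with compact support
 contained in [0,H) x [0,oo)\<close>
definition C1c :: "ereal \<Rightarrow> (real \<Rightarrow> real \<Rightarrow> real) \<Rightarrow> bool" where
  "C1c H \<phi> \<longleftrightarrow>
     (\<exists>px ps :: real \<Rightarrow> real \<Rightarrow> real.
        (\<forall>x s. ((\<lambda>(a,b). \<phi> a b) has_derivative (\<lambda>(da,db). px x s * da + ps x s * db)) (at (x,s)))
        \<and> continuous_on UNIV (\<lambda>(x,s). px x s) \<and> continuous_on UNIV (\<lambda>(x,s). ps x s))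
   \<and> (\<exists>K. compact K \<and> K \<subseteq> dom0 H \<times> {0..} \<and>
        (\<forall>x s. (x,s) \<in> dom0 H \<times> {0..} - K \<longrightarrow> \<phi> x s = 0))"

definition dxp :: "(real \<Rightarrow> real \<Rightarrow> real) \<Rightarrow> real \<Rightarrow> real \<Rightarrow> real" where
  "dxp \<phi> x s = deriv (\<lambda>y. \<phi> y s) x"

definition dsp :: "(real \<Rightarrow> real \<Rightarrow> real) \<Rightarrow> real \<Rightarrow> real \<Rightarrow> real" where
  "dsp \<phi> x s = deriv (\<lambda>r. \<phi> x r) s"

text \<open>Stieltjes integral int_0^t f(s) dK(s) for C^1 f, written via integration by parts\<close>
definition stieltjes :: "(real \<Rightarrow> real) \<Rightarrow> (real \<Rightarrow> real) \<Rightarrow> real \<Rightarrow> real" where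
  "stieltjes f K t = f t * K t - f 0 * K 0 - (\<integral>s\<in>{0..t}. deriv f s * K s \<partial>lborel)"

definition Dfl :: "(real \<Rightarrow> real) \<Rightarrow> (real \<Rightarrow> real measure) \<Rightarrow> real \<Rightarrow> real" where
  "Dfl gs \<nu> t = enn2real (\<integral>\<^sup>+s\<in>{0..t}. pair_nn (hazard gs) (\<nu> s) \<partial>lborel)"

definition Sfl :: "(real \<Rightarrow> real) \<Rightarrow> (real \<Rightarrow> real measure) \<Rightarrow> real \<Rightarrow> real" where
  "Sfl gr \<eta> t = enn2real (\<integral>\<^sup>+s\<in>{0..t}. pair_nn (hazard gr) (\<eta> s) \<partial>lborel)"

definition Kfl :: "(real \<Rightarrow> real) \<Rightarrow> (real \<Rightarrow> real measure) \<Rightarrow> real \<Rightarrow> real" where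
  "Kfl gs \<nu> t = mass (\<nu> t) - mass (\<nu> 0) + Dfl gs \<nu> t"

definition Qfl :: "(real \<Rightarrow> real) \<Rightarrow> (real \<Rightarrow> real measure) \<Rightarrow> real \<Rightarrow> real" where
  "Qfl X \<nu> t = X t - mass (\<nu> t)"

definition Rfl_nn :: "(real \<Rightarrow> real) \<Rightarrow> (real \<Rightarrow> real) \<Rightarrow> (real \<Rightarrow> real measure)
    \<Rightarrow> (real \<Rightarrow> real measure) \<Rightarrow> real \<Rightarrow> ennreal" where
  "Rfl_nn gr X \<nu> \<eta> t = (\<integral>\<^sup>+s\<in>{0..t}. (\<integral>\<^sup>+y\<in>{0..Qfl X \<nu> s}.
       ennreal (hazard gr (Fmu_inv (\<eta> s) y)) \<partial>lborel) \<partial>lborel)"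

definition cadlag_sol :: "ereal \<Rightarrow> ereal \<Rightarrow> (real \<Rightarrow> real) \<Rightarrow> (real \<Rightarrow> real measure)
    \<Rightarrow> (real \<Rightarrow> real measure) \<Rightarrow> bool" where
  "cadlag_sol Hs Hr X \<nu> \<eta> \<longleftrightarrow> (\<forall>t\<ge>0.
      MF Hs (\<nu> t) \<and> MF Hr (\<eta> t)
      \<and> (X \<longlongrightarrow> X t) (at_right t) \<and> wconv Hs \<nu> (\<nu> t) (at_right t) \<and> wconv Hr \<eta> (\<eta> t) (at_right t)
      \<and> (t > 0 \<longrightarrow> (\<exists>a. (X \<longlongrightarrow> a) (at_left t))
            \<and> (\<exists>m. MF Hs m \<and> wconv Hs \<nu> m (at_left t))
            \<and> (\<exists>m. MF Hr m \<and> wconv Hr \<eta> m (at_left t))))"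

definition fluid_solution :: "(real \<Rightarrow> real) \<Rightarrow> (real \<Rightarrow> real) \<Rightarrow> real
    \<Rightarrow> (real \<Rightarrow> real) \<Rightarrow> (real \<Rightarrow> real measure) \<Rightarrow> (real \<Rightarrow> real measure) \<Rightarrow> bool" where
  "fluid_solution gs gr lam X \<nu> \<eta> \<longleftrightarrow>
     S0bar (Hend gs) (Hend gr) (X 0) (\<nu> 0) (\<eta> 0)
   \<and> cadlag_sol (Hend gs) (Hend gr) X \<nu> \<eta>
   \<and> (\<forall>t\<ge>0.
        (\<integral>\<^sup>+s\<in>{0..t}. pair_nn (hazard gr) (\<eta> s) \<partial>lborel) < \<infinity>
      \<and> (\<integral>\<^sup>+s\<in>{0..t}. pair_nn (hazard gs) (\<nu> s) \<partial>lborel) < \<infinity>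
      \<and> (\<forall>\<phi>. C1c (Hend gs) \<phi> \<longrightarrow>
           (\<integral>x. \<phi> x t \<partial>\<nu> t) = (\<integral>x. \<phi> x 0 \<partial>\<nu> 0)
             + (\<integral>s\<in>{0..t}. (\<integral>x. dsp \<phi> x s + dxp \<phi> x s \<partial>\<nu> s) \<partial>lborel)
             - (\<integral>s\<in>{0..t}. (\<integral>x. hazard gs x * \<phi> x s \<partial>\<nu> s) \<partial>lborel)
             + stieltjes (\<lambda>s. \<phi> 0 s) (Kfl gs \<nu>) t)
      \<and> (\<forall>\<phi>. C1c (Hend gr) \<phi> \<longrightarrow>
           (\<integral>x. \<phi> x t \<partial>\<eta> t) = (\<integral>x. \<phi> x 0 \<partial>\<eta> 0)
             + (\<integral>s\<in>{0..t}. (\<integral>x. dsp \<phi> x s + dxp \<phi> x s \<partial>\<eta> s) \<partial>lborel)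
             - (\<integral>s\<in>{0..t}. (\<integral>x. hazard gr x * \<phi> x s \<partial>\<eta> s) \<partial>lborel)
             + lam * (\<integral>s\<in>{0..t}. \<phi> 0 s \<partial>lborel))
      \<and> 1 - mass (\<nu> t) = max 0 (1 - X t)
      \<and> Rfl_nn gr X \<nu> \<eta> t < \<infinity>
      \<and> X t = X 0 + lam * t - Dfl gs \<nu> t - enn2real (Rfl_nn gr X \<nu> \<eta> t)
      \<and> Qfl X \<nu> t \<le> mass (\<eta> t))"

definition ess_inf_haz :: "(real \<Rightarrow> real) \<Rightarrow> ereal" where
  "ess_inf_haz gs = - esssup (restrict_space lborel {0..}) (\<lambda>x. - ereal (hazard gs x))"

definition ess_sup_haz :: "(real \<Rightarrow> real) \<Rightarrow> ereal" where
  "ess_sup_haz gs = esssup (restrict_space lborel {0..}) (\<lambda>x. ereal (hazard gs x))"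

definition hs_theta :: "(real \<Rightarrow> real) \<Rightarrow> real measure \<Rightarrow> real \<Rightarrow> real" where
  "hs_theta gs \<nu>0 t = (\<integral>x. ccdf_d gs (x + t) / ccdf_d gs x * hazard gs (x + t) \<partial>\<nu>0)"

end

theory Submission
  imports Defs
begin

(* Under (H1) the hazard rate of G^s lies between eps > 0 and c. The lower bound says
   g^s >= eps * Gbar^s, so Gbar^s(y) * (1 + eps (y - x)) <= Gbar^s(x); iterating over unit
   steps gives the geometric decay Gbar^s(x + t) / Gbar^s(x) <= (1 + eps)^(1 - t).
   Hence the integrand of <h^s, theta_t> lies between 0 and min c (c (1 + eps)^(1 - t)),
   and since nu_0 has mass at most 1 so does <h^s, theta_t>. Exponential decay gives
   integrability of <h^s, theta_t>, and of its entropy via |y ln y| <= 2 sqrt y + y^2.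
   Only the initial measure nu_0 enters theta_t: neither lam > 1 nor the fluid dynamics
   play a role. *)

lemma set_integrable_exp_neg:
  assumes "0 < (a::real)"
  shows "set_integrable lborel {0..} (\<lambda>t::real. exp (- a * t))"
proof -
  have "set_integrable lebesgue {0..} (\<lambda>t::real. exp (- a * t))"
    using assms by (intro nonnegative_absolutely_integrable_1 integrable_on_exp_minus_to_infinity) auto
  then show ?thesis
    unfolding set_integrable_def by (subst (asm) integrable_completion) auto
qed

lemma abs_mult_ln_le:
  assumes "0 \<le> (y::real)"
  shows "\<bar>y * ln y\<bar> \<le> 2 * sqrt y + y\<^sup>2"
proof (cases "y \<le> 1")
  case True
  show ?thesis
  proof (cases "y = 0")
    case False
    then have "0 < sqrt y" using assms by simp
    \<comment> \<open>\<open>ln (1/z) \<le> 1/z - 1\<close> at \<open>z = sqrt y\<close> gives \<open>- ln y \<le> 2 / sqrt y\<close>\<close>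
    then have "ln (1 / sqrt y) \<le> 1 / sqrt y - 1" by (intro ln_le_minus_one) simp
    moreover have "ln y = - 2 * ln (1 / sqrt y)"
      using \<open>0 < sqrt y\<close> by (simp add: ln_div ln_sqrt)
    ultimately have "- ln y \<le> 2 / sqrt y" by simp
    moreover have "ln y \<le> 0" using True \<open>0 < sqrt y\<close> by simp
    ultimately have "\<bar>y * ln y\<bar> = y * (- ln y)"
      using assms by (simp add: abs_mult)
    also have "\<dots> \<le> y * (2 / sqrt y)"
      using \<open>- ln y \<le> 2 / sqrt y\<close> assms by (rule mult_left_mono)
    also have "\<dots> = 2 * sqrt y"
      using \<open>0 < sqrt y\<close> by (metis real_div_sqrt assms times_divide_eq_right mult.commute)
    finally show ?thesis by (simp add: add_increasing2)
  qed simp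
next
  case False
  then have "0 \<le> y * ln y" by simp
  moreover have "y * ln y \<le> y * y"
    using False ln_le_minus_one[of y] by (intro mult_left_mono) auto
  ultimately show ?thesis
    unfolding power2_eq_square using real_sqrt_ge_zero[OF assms] by linarith
qed

lemma sqrt_exp: "sqrt (exp x) = exp (x / 2)"
proof -
  have "exp x = (exp (x / 2))\<^sup>2" by (simp add: power2_eq_square flip: exp_add)
  then show ?thesis by simp
qed

lemma
  fixes f :: "real \<Rightarrow> real"
  assumes f_meas [measurable]: "f \<in> borel_measurable lborel" and "0 < a"
    and f_bound: "\<And>t. 0 \<le> t \<Longrightarrow> 0 \<le> f t \<and> f t \<le> K * exp (- a * t)"
  shows set_integrable_of_exp_decay: "set_integrable lborel {0..} f"
    and set_integrable_mult_ln_of_exp_decay: "set_integrable lborel {0..} (\<lambda>t. f t * ln (f t))"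
proof -
  have "0 \<le> K" using f_bound[of 0] by simp
  have "set_integrable lborel {0..} (\<lambda>t. K * exp (- a * t))"
    using set_integrable_exp_neg[OF \<open>0 < a\<close>] by (rule set_integrable_mult_right)
  then show "set_integrable lborel {0..} f"
    by (rule set_integrable_bound) (use f_bound \<open>0 \<le> K\<close> in \<open>auto simp: set_borel_measurable_def intro!: AE_I2\<close>)
  have majorant: "\<bar>f t * ln (f t)\<bar> \<le> 2 * sqrt K * exp (- (a/2) * t) + K\<^sup>2 * exp (- (2*a) * t)"
    if "0 \<le> t" for t
  proof -
    have "\<bar>f t * ln (f t)\<bar> \<le> 2 * sqrt (f t) + (f t)\<^sup>2"
      using f_bound[OF that] by (intro abs_mult_ln_le) auto
    also have "\<dots> \<le> 2 * sqrt (K * exp (- a * t)) + (K * exp (- a * t))\<^sup>2"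
      using f_bound[OF that] by (intro add_mono mult_left_mono real_sqrt_le_mono power_mono) auto
    also have "\<dots> = 2 * sqrt K * exp (- (a/2) * t) + K\<^sup>2 * exp (- (2*a) * t)"
      by (simp add: real_sqrt_mult sqrt_exp power_mult_distrib flip: exp_of_nat_mult)
    finally show ?thesis .
  qed
  have "set_integrable lborel {0..} (\<lambda>t. 2 * sqrt K * exp (- (a/2) * t) + K\<^sup>2 * exp (- (2*a) * t))"
    using \<open>0 < a\<close> by (intro set_integral_add set_integrable_mult_right set_integrable_exp_neg) auto
  then show "set_integrable lborel {0..} (\<lambda>t. f t * ln (f t))"
    by (rule set_integrable_bound) (use majorant \<open>0 \<le> K\<close> in \<open>auto simp: set_borel_measurable_def intro!: AE_I2\<close>)
qed

lemma cdf_d_eq_integral: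
  "cdf_d g u = (\<integral>z. indicator {..u} z * (indicator {0..} z * g z) \<partial>lborel)"
  unfolding cdf_d_def set_lebesgue_integral_def
  by (intro Bochner_Integration.integral_cong) (auto simp: indicator_def)

lemma integrable_density:
  assumes "is_density g"
  shows "integrable lborel (\<lambda>z. indicator {0..} z * g z)"
proof (rule integrableI_nonneg)
  have g_meas [measurable]: "g \<in> borel_measurable borel"
    using assms unfolding is_density_def by auto
  show "(\<lambda>z. indicator {0..} z * g z) \<in> borel_measurable lborel" by measurable
  show "AE z in lborel. 0 \<le> indicator {0..} z * g z"
    using assms unfolding is_density_def by auto
  have "(\<integral>\<^sup>+z. ennreal (indicator {0..} z * g z) \<partial>lborel) = (\<integral>\<^sup>+z\<in>{0..}. ennreal (g z) \<partial>lborel)"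
    by (intro nn_integral_cong) (auto simp: indicator_def)
  then show "(\<integral>\<^sup>+z. ennreal (indicator {0..} z * g z) \<partial>lborel) < \<infinity>"
    using assms unfolding is_density_def by simp
qed

lemma integrable_density_indicator:
  assumes "is_density g" "A \<in> sets borel"
  shows "integrable lborel (\<lambda>z. indicator A z * (indicator {0..} z * g z))"
  using integrable_mult_indicator[OF _ integrable_density[OF assms(1)], of A] assms(2) by simp

lemma mono_cdf_d:
  assumes "is_density g"
  shows "mono (cdf_d g)"
proof
  fix x y :: real
  assume "x \<le> y"
  then show "cdf_d g x \<le> cdf_d g y"
    using assms unfolding cdf_d_eq_integral is_density_def
    by (intro integral_mono integrable_density_indicator assms) (auto simp: indicator_def)
qed

lemma cdf_d_diff:
  assumes "is_density g" "0 \<le> x" "x \<le> y"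
  shows "cdf_d g y - cdf_d g x = (\<integral>z. indicator {x<..y} z * g z \<partial>lborel)"
proof -
  have "cdf_d g y - cdf_d g x = (\<integral>z. indicator {..y} z * (indicator {0..} z * g z)
      - indicator {..x} z * (indicator {0..} z * g z) \<partial>lborel)"
    unfolding cdf_d_eq_integral
    by (rule Bochner_Integration.integral_diff[symmetric]) (auto intro!: integrable_density_indicator assms)
  also have "\<dots> = (\<integral>z. indicator {x<..y} z * g z \<partial>lborel)"
    using assms(2,3) by (intro Bochner_Integration.integral_cong) (auto simp: indicator_def)
  finally show ?thesis .
qed

locale hazard_bounded_below =
  fixes g :: "real \<Rightarrow> real" and \<epsilon> :: real
  assumes density: "is_density g"
    and pos: "0 < \<epsilon>"
    and hazard_ge: "\<And>z. 0 \<le> z \<Longrightarrow> \<epsilon> \<le> hazard g z"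
begin

lemma density_nonneg: "0 \<le> g z"
  using density unfolding is_density_def by auto

lemma ccdf_d_pos:
  assumes "0 \<le> z"
  shows "0 < ccdf_d g z"
proof -
  have "0 < g z / ccdf_d g z"
    using hazard_ge[OF assms] pos unfolding hazard_def by linarith
  then show ?thesis
    using density_nonneg[of z] by (simp add: zero_less_divide_iff)
qed

lemma density_ge: "0 \<le> z \<Longrightarrow> \<epsilon> * ccdf_d g z \<le> g z"
  using hazard_ge[of z] ccdf_d_pos[of z] unfolding hazard_def by (simp add: le_divide_eq)

lemma ccdf_d_antimono: "x \<le> y \<Longrightarrow> ccdf_d g y \<le> ccdf_d g x"
  using mono_cdf_d[OF density] unfolding ccdf_d_def mono_def by auto

lemma ccdf_d_step:
  assumes "0 \<le> x" "x \<le> y"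
  shows "ccdf_d g y * (1 + \<epsilon> * (y - x)) \<le> ccdf_d g x"
proof -
  have "\<epsilon> * ccdf_d g y * (y - x) = (\<integral>z. indicator {x<..y} z * (\<epsilon> * ccdf_d g y) \<partial>lborel)"
    using assms by simp
  also have "\<dots> \<le> (\<integral>z. indicator {x<..y} z * g z \<partial>lborel)"
  proof (rule integral_mono)
    show "integrable lborel (\<lambda>z. indicator {x<..y} z * (\<epsilon> * ccdf_d g y))"
      using assms by (simp add: integrable_indicator_iff)
    have "integrable lborel (\<lambda>z. indicator {x<..y} z * (indicator {0..} z * g z))"
      by (rule integrable_density_indicator[OF density]) simp
    then show "integrable lborel (\<lambda>z. indicator {x<..y} z * g z)"
      by (rule Bochner_Integration.integrable_cong[THEN iffD1, rotated -1])
        (use assms in \<open>auto simp: indicator_def\<close>)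
    fix z
    have "\<epsilon> * ccdf_d g y \<le> g z" if "z \<in> {x<..y}"
      using that assms ccdf_d_antimono[of z y] density_ge[of z] pos
      by (smt (verit) greaterThanAtMost_iff mult_left_mono)
    then show "indicator {x<..y} z * (\<epsilon> * ccdf_d g y) \<le> indicator {x<..y} z * g z"
      by (simp add: indicator_def)
  qed
  also have "\<dots> = ccdf_d g x - ccdf_d g y"
    using cdf_d_diff[OF density assms] unfolding ccdf_d_def by simp
  finally show ?thesis by (simp add: algebra_simps)
qed

lemma ccdf_d_shift_nat_le:
  assumes "0 \<le> x"
  shows "ccdf_d g (x + real k) * (1 + \<epsilon>) ^ k \<le> ccdf_d g x"
proof (induction k)
  case (Suc k)
  have "ccdf_d g (x + real (Suc k)) * (1 + \<epsilon>) \<le> ccdf_d g (x + real k)"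
    using ccdf_d_step[of "x + real k" "x + real (Suc k)"] assms by simp
  then have "ccdf_d g (x + real (Suc k)) * (1 + \<epsilon>) * (1 + \<epsilon>) ^ k \<le> ccdf_d g (x + real k) * (1 + \<epsilon>) ^ k"
    using pos by (intro mult_right_mono) auto
  then show ?case
    using Suc by (simp add: algebra_simps)
qed simp

lemma ccdf_d_shift_le:
  assumes "0 \<le> x" "0 \<le> t"
  shows "ccdf_d g (x + t) \<le> ccdf_d g x * ((1 + \<epsilon>) * exp (- ln (1 + \<epsilon>) * t))"
proof -
  define k where "k = nat \<lfloor>t\<rfloor>"
  have k: "real k \<le> t" "t - 1 \<le> real k"
    using assms unfolding k_def by linarith+
  have "exp (ln (1 + \<epsilon>) * t) \<le> exp (ln (1 + \<epsilon>) * (real k + 1))"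
    using k pos by (intro exp_mono mult_left_mono) auto
  also have "\<dots> = (1 + \<epsilon>) ^ k * (1 + \<epsilon>)"
    using pos by (simp add: algebra_simps exp_add exp_of_nat_mult)
  finally have "1 / ((1 + \<epsilon>) ^ k) \<le> (1 + \<epsilon>) * exp (- ln (1 + \<epsilon>) * t)"
    using pos by (simp add: exp_minus divide_simps mult.commute)
  have "ccdf_d g (x + t) \<le> ccdf_d g (x + real k)"
    using ccdf_d_antimono k by auto
  also have "\<dots> \<le> ccdf_d g x * (1 / (1 + \<epsilon>) ^ k)"
    using ccdf_d_shift_nat_le[OF assms(1), of k] pos by (simp add: le_divide_eq)
  also have "\<dots> \<le> ccdf_d g x * ((1 + \<epsilon>) * exp (- ln (1 + \<epsilon>) * t))"
    using \<open>1 / ((1 + \<epsilon>) ^ k) \<le> _\<close> ccdf_d_pos[OF assms(1)] by (intro mult_left_mono) auto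
  finally show ?thesis .
qed

end

lemma (in subprob_space) integral_bounds_AE:
  fixes f :: "'a \<Rightarrow> real"
  assumes "f \<in> borel_measurable M" "0 \<le> B" "AE x in M. 0 \<le> f x \<and> f x \<le> B"
  shows "0 \<le> integral\<^sup>L M f \<and> integral\<^sup>L M f \<le> B"
proof -
  have "integrable M f"
    using assms by (intro integrable_const_bound[of _ B]) auto
  then have "integral\<^sup>L M f \<le> measure M (space M) * B"
    using integral_mono_AE[of M f "\<lambda>_. B"] assms(3) by auto
  also have "\<dots> \<le> B"
    using subprob_measure_le_1 assms(2) by (intro mult_left_le_one_le) auto
  finally show ?thesis
    using assms(3) by (auto intro: integral_nonneg_AE)
qed

lemma borel_measurable_hs_theta_kernel:
  assumes "is_density g" "sets \<nu>0 = sets borel"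
  shows "(\<lambda>(t, x). ccdf_d g (x + t) / ccdf_d g x * hazard g (x + t)) \<in> borel_measurable (lborel \<Otimes>\<^sub>M \<nu>0)"
proof -
  have [measurable]: "cdf_d g \<in> borel_measurable borel"
    by (rule borel_measurable_mono[OF mono_cdf_d[OF assms(1)]])
  have [measurable]: "g \<in> borel_measurable borel"
    using assms(1) unfolding is_density_def by auto
  have "(\<lambda>(t, x). ccdf_d g (x + t) / ccdf_d g x * hazard g (x + t)) \<in> borel_measurable (borel \<Otimes>\<^sub>M borel)"
    unfolding hazard_def ccdf_d_def by measurable
  then show ?thesis
    by (subst measurable_cong_sets[OF sets_pair_measure_cong[OF sets_lborel assms(2)] refl])
qed

lemma borel_measurable_hs_theta:
  assumes "is_density g" "finite_measure \<nu>0" "sets \<nu>0 = sets borel"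
  shows "hs_theta g \<nu>0 \<in> borel_measurable lborel"
proof -
  interpret finite_measure \<nu>0 by (rule assms(2))
  show ?thesis
    unfolding hs_theta_def
    by (rule borel_measurable_lebesgue_integral[OF borel_measurable_hs_theta_kernel[OF assms(1,3)]])
qed

lemma (in hazard_bounded_below) hs_theta_bounds:
  assumes hazard_le: "\<And>z. 0 \<le> z \<Longrightarrow> hazard g z \<le> c"
    and \<nu>0: "subprob_space \<nu>0" "sets \<nu>0 = sets borel" "AE x in \<nu>0. 0 \<le> x"
    and "0 \<le> t"
  shows "0 \<le> hs_theta g \<nu>0 t \<and> hs_theta g \<nu>0 t \<le> min c (c * (1 + \<epsilon>) * exp (- ln (1 + \<epsilon>) * t))"
proof -
  let ?B = "min c (c * (1 + \<epsilon>) * exp (- ln (1 + \<epsilon>) * t))"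
  have c: "0 \<le> c" using hazard_ge[of 0] hazard_le[of 0] pos by simp
  have kernel: "0 \<le> ccdf_d g (x + t) / ccdf_d g x * hazard g (x + t)
      \<and> ccdf_d g (x + t) / ccdf_d g x * hazard g (x + t) \<le> ?B" if "0 \<le> x" for x
  proof -
    have ratio: "0 \<le> ccdf_d g (x + t) / ccdf_d g x"
        "ccdf_d g (x + t) / ccdf_d g x \<le> min 1 ((1 + \<epsilon>) * exp (- ln (1 + \<epsilon>) * t))"
      using ccdf_d_pos[of x] ccdf_d_pos[of "x + t"] ccdf_d_antimono[of x "x + t"]
        ccdf_d_shift_le[OF that \<open>0 \<le> t\<close>] that \<open>0 \<le> t\<close>
      by (auto simp: divide_le_eq mult.commute)
    have hazard: "0 \<le> hazard g (x + t)" "hazard g (x + t) \<le> c"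
      using hazard_ge[of "x + t"] hazard_le[of "x + t"] pos that \<open>0 \<le> t\<close> by auto
    have "ccdf_d g (x + t) / ccdf_d g x * hazard g (x + t)
        \<le> min 1 ((1 + \<epsilon>) * exp (- ln (1 + \<epsilon>) * t)) * c"
      using ratio hazard by (intro mult_mono) auto
    also have "\<dots> = ?B"
      using c by (simp add: min_mult_distrib_right, simp add: mult_ac)
    finally show ?thesis
      using mult_nonneg_nonneg[OF ratio(1) hazard(1)] by blast
  qed
  interpret subprob_space \<nu>0 by (rule \<nu>0(1))
  have "(\<lambda>(t, x). ccdf_d g (x + t) / ccdf_d g x * hazard g (x + t)) \<in> borel_measurable (lborel \<Otimes>\<^sub>M \<nu>0)"
    using borel_measurable_hs_theta_kernel[OF density \<nu>0(2)] .
  from measurable_Pair2[OF this]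
  have "(\<lambda>x. ccdf_d g (x + t) / ccdf_d g x * hazard g (x + t)) \<in> borel_measurable \<nu>0"
    by simp
  moreover have "0 \<le> ?B"
    using c pos by simp
  moreover have "AE x in \<nu>0. 0 \<le> ccdf_d g (x + t) / ccdf_d g x * hazard g (x + t)
      \<and> ccdf_d g (x + t) / ccdf_d g x * hazard g (x + t) \<le> ?B"
    using \<nu>0(3) by eventually_elim (rule kernel)
  ultimately show ?thesis
    unfolding hs_theta_def by (rule integral_bounds_AE)
qed

lemma S0bar_subprob_space:
  assumes "S0bar Hs Hr x \<nu> \<eta>"
  shows "subprob_space \<nu>" "sets \<nu> = sets borel" "AE y in \<nu>. 0 \<le> y"
proof -
  have "MF Hs \<nu>" and mass_le: "mass \<nu> \<le> 1"
    using assms unfolding S0bar_def by auto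
  then have sets: "sets \<nu> = sets borel" and fin: "finite_measure \<nu>"
    and null: "emeasure \<nu> (- dom0 Hs) = 0"
    unfolding MF_def by auto
  have space: "space \<nu> = UNIV"
    using sets_eq_imp_space_eq[OF sets] by simp
  show "sets \<nu> = sets borel" by (fact sets)
  show "subprob_space \<nu>"
  proof
    show "emeasure \<nu> (space \<nu>) \<le> 1"
      using mass_le unfolding space mass_def finite_measure.emeasure_eq_measure[OF fin] by simp
  qed (simp add: space)
  have "- dom0 Hs \<in> null_sets \<nu>"
    using null sets by (auto simp: null_sets_def dom0_def intro!: measurable_sets)
  then show "AE y in \<nu>. 0 \<le> y"
    by (rule AE_I') (auto simp: dom0_def)
qed

theorem mainTheorem6:
  fixes gs gr :: "real \<Rightarrow> real" and lam :: real and X :: "real \<Rightarrow> real"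
    and \<nu> \<eta> :: "real \<Rightarrow> real measure"
  assumes A1: "A1 gs gr"
    and H1_pos: "0 < ess_inf_haz gs" and H1_fin: "ess_sup_haz gs < \<infinity>"
    and H1_version: "\<forall>x\<ge>0. ess_inf_haz gs \<le> ereal (hazard gs x) \<and> ereal (hazard gs x) \<le> ess_sup_haz gs"
    and lam: "lam > 1"
    and sol: "fluid_solution gs gr lam X \<nu> \<eta>"
  shows "(\<forall>t\<ge>0. ereal (hs_theta gs (\<nu> 0) t) \<le> ess_sup_haz gs)
    \<and> set_integrable lborel {0..} (\<lambda>t. hs_theta gs (\<nu> 0) t)
    \<and> set_integrable lborel {0..} (\<lambda>t. hs_theta gs (\<nu> 0) t * ln (hs_theta gs (\<nu> 0) t))"
proof -
  have h0: "ess_inf_haz gs \<le> ereal (hazard gs 0)" "ereal (hazard gs 0) \<le> ess_sup_haz gs"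
    using H1_version by auto
  obtain \<epsilon> where \<epsilon>: "ess_inf_haz gs = ereal \<epsilon>"
    using h0(1) H1_pos by (cases "ess_inf_haz gs") auto
  obtain c where c: "ess_sup_haz gs = ereal c"
    using h0(2) H1_fin by (cases "ess_sup_haz gs") auto
  interpret hazard_bounded_below gs \<epsilon>
  proof
    show "is_density gs" using A1 unfolding A1_def by simp
    show "0 < \<epsilon>" using H1_pos \<epsilon> by simp
    show "\<epsilon> \<le> hazard gs z" if "0 \<le> z" for z using H1_version \<epsilon> that by auto
  qed
  have hazard_le: "\<And>z. 0 \<le> z \<Longrightarrow> hazard gs z \<le> c"
    using H1_version c by auto
  note \<nu>0 = S0bar_subprob_space[OF conjunct1[OF sol[unfolded fluid_solution_def]]]
  have bounds: "0 \<le> hs_theta gs (\<nu> 0) t \<and> hs_theta gs (\<nu> 0) t \<le> c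
      \<and> hs_theta gs (\<nu> 0) t \<le> c * (1 + \<epsilon>) * exp (- ln (1 + \<epsilon>) * t)" if "0 \<le> t" for t
    using hs_theta_bounds[OF hazard_le \<nu>0 that] by simp
  have meas: "hs_theta gs (\<nu> 0) \<in> borel_measurable lborel"
    using borel_measurable_hs_theta[OF density subprob_space.axioms(1)[OF \<nu>0(1)] \<nu>0(2)] .
  have "0 < ln (1 + \<epsilon>)"
    using pos by simp
  have "set_integrable lborel {0..} (hs_theta gs (\<nu> 0))"
    by (rule set_integrable_of_exp_decay[OF meas \<open>0 < ln (1 + \<epsilon>)\<close>]) (use bounds in blast)
  moreover have "set_integrable lborel {0..} (\<lambda>t. hs_theta gs (\<nu> 0) t * ln (hs_theta gs (\<nu> 0) t))"
    by (rule set_integrable_mult_ln_of_exp_decay[OF meas \<open>0 < ln (1 + \<epsilon>)\<close>]) (use bounds in blast)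
  ultimately show ?thesis
    using bounds c by auto
qed

end
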